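(* Let $G$ be a proper interval graph with no twin vertices, let $\sigma$ be a proper interval ordering of $G$, let each node of the line-incompatibility graph $\widehat{G}$ carry a positive weight, and let $I_{\widehat{G}}$ be a maximum-weight independent set of $\widehat{G}$. Let $x,y,z$ be vertices of $G$ with $x\prec y\prec z$ in $\sigma$ and $xz\in I_{\widehat{G}}$. (1) If $xy\notin I_{\widehat{G}}$ and $yz\in I_{\widehat{G}}$, then $xy$ is non-adjacent in $\widehat{G}$ to every node of the form $x_\ell x\in I_{\widehat{G}}$, and there is a vertex $w$ such that $yw\in I_{\widehat{G}}$, $\{x,w\}\notin E(G)$, and $z\prec w$. (2) If $xy\in I_{\widehat{G}}$ and $yz\notin I_{\widehat{G}}$, then $yz$ is non-adjacent in $\widehat{G}$ to every node of the form $zz_r\in I_{\widehat{G}}$, and there is a vertex $w$ such that $wy\in I_{\widehat{G}}$, $\{w,z\}\notin E(G)$, and $w\prec x$.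
   Context: All graphs are finite, simple and undirected. Two adjacent vertices $u,v$ are twins if $N[u]=N[v]$. A vertex ordering $\sigma$ of $G$ is a proper interval ordering if for all vertices $x\prec y\prec z$ in $\sigma$, $\{x,z\}\in E(G)$ implies $\{x,y\},\{y,z\}\in E(G)$; a graph is a proper interval graph if and only if it admits a proper interval ordering. The line-incompatibility graph $\widehat{G}$ of $G$ has one node $uv$ for each edge $\{u,v\}$ of $G$, two nodes being adjacent iff the corresponding edges are of the form $\{u,v\},\{v,w\}$ with $\{u,w\}\notin E(G)$. A maximum-weight independent set is an independent set maximizing the total weight of its nodes. *)

theory Defs
  imports Complex_Main
begin

definition simple_graph :: "'a set \<Rightarrow> ('a \<Rightarrow> 'a \<Rightarrow> bool) \<Rightarrow> bool" where
  "simple_graph V E \<longleftrightarrow> finite V \<and> (\<forall>u v. E u v \<longrightarrow> E v u)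
     \<and> (\<forall>u. \<not> E u u) \<and> (\<forall>u v. E u v \<longrightarrow> u \<in> V \<and> v \<in> V)"

definition closed_nbhd :: "'a set \<Rightarrow> ('a \<Rightarrow> 'a \<Rightarrow> bool) \<Rightarrow> 'a \<Rightarrow> 'a set" where
  "closed_nbhd V E u = {v \<in> V. E u v} \<union> {u}"

definition twins :: "'a set \<Rightarrow> ('a \<Rightarrow> 'a \<Rightarrow> bool) \<Rightarrow> 'a \<Rightarrow> 'a \<Rightarrow> bool" where
  "twins V E u v \<longleftrightarrow> E u v \<and> closed_nbhd V E u = closed_nbhd V E v"

definition twin_free :: "'a set \<Rightarrow> ('a \<Rightarrow> 'a \<Rightarrow> bool) \<Rightarrow> bool" where
  "twin_free V E \<longleftrightarrow> (\<forall>u\<in>V. \<forall>v\<in>V. \<not> twins V E u v)"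

definition vertex_ordering :: "'a set \<Rightarrow> 'a list \<Rightarrow> bool" where
  "vertex_ordering V \<sigma> \<longleftrightarrow> distinct \<sigma> \<and> set \<sigma> = V"

definition prec :: "'a list \<Rightarrow> 'a \<Rightarrow> 'a \<Rightarrow> bool" where
  "prec \<sigma> x y \<longleftrightarrow> (\<exists>i j. i < j \<and> j < length \<sigma> \<and> \<sigma> ! i = x \<and> \<sigma> ! j = y)"

definition proper_interval_ordering :: "'a set \<Rightarrow> ('a \<Rightarrow> 'a \<Rightarrow> bool) \<Rightarrow> 'a list \<Rightarrow> bool" where
  "proper_interval_ordering V E \<sigma> \<longleftrightarrow> vertex_ordering V \<sigma> \<and>
     (\<forall>x y z. prec \<sigma> x y \<and> prec \<sigma> y z \<and> E x z \<longrightarrow> E x y \<and> E y z)"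

definition proper_interval_graph :: "'a set \<Rightarrow> ('a \<Rightarrow> 'a \<Rightarrow> bool) \<Rightarrow> bool" where
  "proper_interval_graph V E \<longleftrightarrow> simple_graph V E \<and> (\<exists>\<sigma>. proper_interval_ordering V E \<sigma>)"

definition lig_nodes :: "'a set \<Rightarrow> ('a \<Rightarrow> 'a \<Rightarrow> bool) \<Rightarrow> 'a set set" where
  "lig_nodes V E = {{u, v} | u v. u \<in> V \<and> v \<in> V \<and> E u v}"

definition lig_adj :: "('a \<Rightarrow> 'a \<Rightarrow> bool) \<Rightarrow> 'a set \<Rightarrow> 'a set \<Rightarrow> bool" where
  "lig_adj E e f \<longleftrightarrow> (\<exists>u v w. e = {u, v} \<and> f = {v, w} \<and> E u v \<and> E v w \<and> u \<noteq> w \<and> \<not> E u w)"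

definition lig_independent :: "'a set \<Rightarrow> ('a \<Rightarrow> 'a \<Rightarrow> bool) \<Rightarrow> 'a set set \<Rightarrow> bool" where
  "lig_independent V E I \<longleftrightarrow> I \<subseteq> lig_nodes V E \<and> (\<forall>e\<in>I. \<forall>f\<in>I. \<not> lig_adj E e f)"

definition lig_max_weight_independent ::
    "'a set \<Rightarrow> ('a \<Rightarrow> 'a \<Rightarrow> bool) \<Rightarrow> ('a set \<Rightarrow> real) \<Rightarrow> 'a set set \<Rightarrow> bool" where
  "lig_max_weight_independent V E wt I \<longleftrightarrow> lig_independent V E I \<and>
     (\<forall>J. lig_independent V E J \<longrightarrow> sum wt J \<le> sum wt I)"

end

theory Submission
  imports Defs
begin

text \<open>Part (1) rests on two facts. First, independence makes two edges of I with a
  common endpoint span a triangle, so x_l z is an edge, and the proper interval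
  property then gives the edge x_l y that makes xy compatible with x_l x. Second, by
  positivity of the weights, the node xy missing from the maximum-weight set I must be
  in conflict with some node of I; locating its far endpoint in the ordering leaves
  only a neighbour w of y beyond z. Part (2) is part (1) for the reversed ordering,
  which is again a proper interval ordering.\<close>

lemma prec_in_set: "prec s a b \<Longrightarrow> a \<in> set s \<and> b \<in> set s"
  unfolding prec_def by (metis nth_mem order.strict_trans)

lemma prec_neq: "distinct s \<Longrightarrow> prec s a b \<Longrightarrow> a \<noteq> b"
  unfolding prec_def using nth_eq_iff_index_eq by fastforce

lemma prec_trans: "distinct s \<Longrightarrow> prec s a b \<Longrightarrow> prec s b c \<Longrightarrow> prec s a c"
  unfolding prec_def
proof (elim exE conjE)
  fix i j i' j'
  assume "distinct s" and h: "i < j" "j < length s" "s ! i = a" "s ! j = b"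
    "i' < j'" "j' < length s" "s ! i' = b" "s ! j' = c"
  then have "j = i'" using nth_eq_iff_index_eq by fastforce
  with h show "\<exists>i j. i < j \<and> j < length s \<and> s ! i = a \<and> s ! j = c"
    by (intro exI[of _ i] exI[of _ j']) auto
qed

lemma prec_total: "a \<in> set s \<Longrightarrow> b \<in> set s \<Longrightarrow> a \<noteq> b \<Longrightarrow> prec s a b \<or> prec s b a"
  unfolding prec_def in_set_conv_nth by (metis linorder_neqE_nat)

lemma prec_rev: "prec (rev s) a b \<longleftrightarrow> prec s b a"
proof -
  have "prec (rev s) a b" if "prec s b a" for s :: "'b list" and a b
  proof -
    from that obtain i j where "i < j" "j < length s" "s ! i = b" "s ! j = a"
      unfolding prec_def by auto
    then show ?thesis unfolding prec_def
      by (intro exI[of _ "length s - 1 - j"] exI[of _ "length s - 1 - i"]) (auto simp: rev_nth)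
  qed
  from this[of s] this[of "rev s"] show ?thesis by auto
qed

lemma proper_interval_ordering_rev:
  "simple_graph V E \<Longrightarrow> proper_interval_ordering V E s \<Longrightarrow> proper_interval_ordering V E (rev s)"
  unfolding proper_interval_ordering_def vertex_ordering_def prec_rev simple_graph_def
  by (metis distinct_rev set_rev)

lemma proper_interval_orderingD:
  "proper_interval_ordering V E s \<Longrightarrow> prec s a b \<Longrightarrow> prec s b c \<Longrightarrow> E a c \<Longrightarrow> E a b \<and> E b c"
  unfolding proper_interval_ordering_def by blast

lemma simple_graph_sym: "simple_graph V E \<Longrightarrow> E a b \<Longrightarrow> E b a"
  unfolding simple_graph_def by blast

lemma proper_interval_ordering_distinct: "proper_interval_ordering V E s \<Longrightarrow> distinct s"
  unfolding proper_interval_ordering_def vertex_ordering_def by blast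

lemma proper_interval_ordering_edge_in_set:
  "simple_graph V E \<Longrightarrow> proper_interval_ordering V E s \<Longrightarrow> E a b \<Longrightarrow> a \<in> set s \<and> b \<in> set s"
  unfolding simple_graph_def proper_interval_ordering_def vertex_ordering_def by blast

lemma proper_interval_non_neighbour_beyond:
  assumes sg: "simple_graph V E" and pio: "proper_interval_ordering V E s"
    and xy: "prec s x y" and yz: "prec s y z" and xz: "E x z"
    and yw: "E y w" and xw: "\<not> E x w" and "w \<noteq> x"
  shows "prec s z w"
proof -
  have w: "w \<in> set s" using proper_interval_ordering_edge_in_set[OF sg pio yw] by blast
  have "\<not> prec s w x"
    using proper_interval_orderingD[OF pio _ xy] simple_graph_sym[OF sg] yw xw by blast
  then have "prec s x w" using prec_total[OF w _ \<open>w \<noteq> x\<close>] prec_in_set[OF xy] by blast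
  then have "\<not> prec s w z" using proper_interval_orderingD[OF pio _ _ xz] xw by blast
  moreover have "w \<noteq> z" using xz xw by blast
  ultimately show ?thesis using prec_total[OF w] prec_in_set[OF yz] by blast
qed

lemma proper_interval_common_neighbour:
  assumes sg: "simple_graph V E" and pio: "proper_interval_ordering V E s"
    and xy: "prec s x y" and yz: "prec s y z" and wx: "E w x" and wz: "E w z" and "w \<noteq> y"
  shows "E w y"
proof -
  have w: "w \<in> set s" using proper_interval_ordering_edge_in_set[OF sg pio wx] by blast
  consider "prec s w y" | "prec s y w" using prec_total[OF w _ \<open>w \<noteq> y\<close>] prec_in_set[OF xy] by blast
  then show ?thesis
  proof cases
    case 1
    then show ?thesis using proper_interval_orderingD[OF pio _ yz wz] by blast
  next
    case 2
    then show ?thesis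
      using proper_interval_orderingD[OF pio xy 2 simple_graph_sym[OF sg wx]] simple_graph_sym[OF sg]
      by blast
  qed
qed

lemma lig_nodes_edge:
  assumes sg: "simple_graph V E" and "{a, b} \<in> lig_nodes V E"
  shows "E a b"
proof -
  obtain u v where "{a, b} = {u, v}" "E u v" using assms(2) unfolding lig_nodes_def by blast
  then show ?thesis using simple_graph_sym[OF sg] by (auto simp: doubleton_eq_iff)
qed

lemma edge_in_lig_nodes: "simple_graph V E \<Longrightarrow> E a b \<Longrightarrow> {a, b} \<in> lig_nodes V E"
  unfolding lig_nodes_def simple_graph_def by blast

lemma finite_lig_nodes:
  assumes "simple_graph V E" shows "finite (lig_nodes V E)"
proof -
  have "lig_nodes V E \<subseteq> Pow V" using assms unfolding lig_nodes_def simple_graph_def by blast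
  moreover have "finite V" using assms unfolding simple_graph_def by blast
  ultimately show ?thesis by (simp add: finite_subset)
qed

lemma lig_independent_edge:
  "simple_graph V E \<Longrightarrow> lig_independent V E I \<Longrightarrow> {a, b} \<in> I \<Longrightarrow> E a b"
  unfolding lig_independent_def using lig_nodes_edge[of V E a b] by blast

lemma lig_adj_sym: "simple_graph V E \<Longrightarrow> lig_adj E e f \<Longrightarrow> lig_adj E f e"
  unfolding lig_adj_def simple_graph_def by (metis insert_commute)

lemma lig_adj_irrefl: "\<not> lig_adj E e e"
  unfolding lig_adj_def by (auto simp: doubleton_eq_iff)

lemma not_lig_adj_triangle: "simple_graph V E \<Longrightarrow> E a c \<Longrightarrow> \<not> lig_adj E {a, b} {b, c}"
  unfolding lig_adj_def by (auto simp: doubleton_eq_iff dest: simple_graph_sym)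

lemma lig_independent_triangle:
  assumes sg: "simple_graph V E" and ind: "lig_independent V E I"
    and ab: "{a, b} \<in> I" and bc: "{b, c} \<in> I" and "a \<noteq> c"
  shows "E a c"
proof (rule ccontr)
  assume "\<not> E a c"
  with assms have "lig_adj E {a, b} {b, c}"
    unfolding lig_adj_def using lig_independent_edge[OF sg ind] by blast
  then show False using ind ab bc unfolding lig_independent_def by blast
qed

lemma lig_max_weight_independent_maximal:
  assumes sg: "simple_graph V E" and pos: "\<forall>e\<in>lig_nodes V E. wt e > 0"
    and mwis: "lig_max_weight_independent V E wt I"
    and e: "e \<in> lig_nodes V E" and "e \<notin> I"
  shows "\<exists>f\<in>I. lig_adj E e f"
proof (rule ccontr)
  assume compatible: "\<not> (\<exists>f\<in>I. lig_adj E e f)"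
  have ind: "lig_independent V E I" using mwis unfolding lig_max_weight_independent_def by blast
  then have "lig_independent V E (insert e I)"
    using e compatible lig_adj_sym[OF sg] lig_adj_irrefl unfolding lig_independent_def by blast
  then have "sum wt (insert e I) \<le> sum wt I"
    using mwis unfolding lig_max_weight_independent_def by blast
  moreover have "finite I"
    using ind finite_lig_nodes[OF sg] finite_subset unfolding lig_independent_def by blast
  moreover have "wt e > 0" using pos e by blast
  ultimately show False using \<open>e \<notin> I\<close> by simp
qed

lemma lig_independent_compatible_left:
  assumes sg: "simple_graph V E" and pio: "proper_interval_ordering V E s"
    and ind: "lig_independent V E I"
    and xy: "prec s x y" and yz: "prec s y z" and xz: "{x, z} \<in> I"
    and lx: "prec s l x" and lxI: "{l, x} \<in> I"
  shows "\<not> lig_adj E {x, y} {l, x}"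
proof -
  have d: "distinct s" using proper_interval_ordering_distinct[OF pio] .
  have ly: "prec s l y" using prec_trans[OF d lx xy] .
  have "E l z" using lig_independent_triangle[OF sg ind lxI xz] prec_neq[OF d prec_trans[OF d ly yz]] .
  then have "E y l" using proper_interval_orderingD[OF pio ly yz] simple_graph_sym[OF sg] by blast
  then show ?thesis using not_lig_adj_triangle[OF sg] by (metis insert_commute)
qed

lemma lig_max_weight_independent_missing_left:
  assumes sg: "simple_graph V E" and pio: "proper_interval_ordering V E s"
    and pos: "\<forall>e\<in>lig_nodes V E. wt e > 0" and mwis: "lig_max_weight_independent V E wt I"
    and xy: "prec s x y" and yz: "prec s y z" and xz: "{x, z} \<in> I" and "{x, y} \<notin> I"
  shows "\<exists>w. {y, w} \<in> I \<and> \<not> E x w \<and> prec s z w"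
proof -
  have ind: "lig_independent V E I" using mwis unfolding lig_max_weight_independent_def by blast
  have Exz: "E x z" using lig_independent_edge[OF sg ind xz] .
  have Exy: "E x y" using proper_interval_orderingD[OF pio xy yz Exz] by blast
  obtain f where "f \<in> I" and "lig_adj E {x, y} f"
    using lig_max_weight_independent_maximal[OF sg pos mwis edge_in_lig_nodes[OF sg Exy]]
      \<open>{x, y} \<notin> I\<close> by blast
  then obtain u v w where uv: "{x, y} = {u, v}" and fI: "{v, w} \<in> I"
    and "E v w" "u \<noteq> w" "\<not> E u w"
    unfolding lig_adj_def by blast
  from uv consider "u = x" "v = y" | "u = y" "v = x" by (auto simp: doubleton_eq_iff)
  then show ?thesis
  proof cases
    case 1
    then show ?thesis
      using fI \<open>E v w\<close> \<open>u \<noteq> w\<close> \<open>\<not> E u w\<close>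
        proper_interval_non_neighbour_beyond[OF sg pio xy yz Exz] by blast
  next
    case 2
    have "w \<noteq> z" using proper_interval_orderingD[OF pio xy yz Exz] \<open>\<not> E u w\<close> 2 by blast
    then have "E w z" using lig_independent_triangle[OF sg ind _ xz] fI 2 by (simp add: insert_commute)
    moreover have "E w x" using \<open>E v w\<close> 2 simple_graph_sym[OF sg] by blast
    ultimately have "E w y" using proper_interval_common_neighbour[OF sg pio xy yz] \<open>u \<noteq> w\<close> 2 by blast
    then show ?thesis using \<open>\<not> E u w\<close> 2 simple_graph_sym[OF sg] by blast
  qed
qed

theorem lemma8:
  fixes V :: "'a set" and E :: "'a \<Rightarrow> 'a \<Rightarrow> bool" and \<sigma> :: "'a list"
    and wt :: "'a set \<Rightarrow> real" and I :: "'a set set" and x y z :: 'a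
  assumes G: "proper_interval_graph V E"
    and tf: "twin_free V E"
    and pio: "proper_interval_ordering V E \<sigma>"
    and pos: "\<forall>e\<in>lig_nodes V E. wt e > 0"
    and mwis: "lig_max_weight_independent V E wt I"
    and xy: "prec \<sigma> x y" and yz: "prec \<sigma> y z"
    and xz: "{x, z} \<in> I"
  shows "({x, y} \<notin> I \<and> {y, z} \<in> I \<longrightarrow>
            (\<forall>xl. prec \<sigma> xl x \<and> {xl, x} \<in> I \<longrightarrow> \<not> lig_adj E {x, y} {xl, x}) \<and>
            (\<exists>w. {y, w} \<in> I \<and> \<not> E x w \<and> prec \<sigma> z w))
       \<and> ({x, y} \<in> I \<and> {y, z} \<notin> I \<longrightarrow>
            (\<forall>zr. prec \<sigma> z zr \<and> {z, zr} \<in> I \<longrightarrow> \<not> lig_adj E {y, z} {z, zr}) \<and>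
            (\<exists>w. {w, y} \<in> I \<and> \<not> E w z \<and> prec \<sigma> w x))"
proof -
  have sg: "simple_graph V E" using G unfolding proper_interval_graph_def by blast
  have ind: "lig_independent V E I" using mwis unfolding lig_max_weight_independent_def by blast
  have rpio: "proper_interval_ordering V E (rev \<sigma>)" using proper_interval_ordering_rev[OF sg pio] .
  have zy: "prec (rev \<sigma>) z y" and yx: "prec (rev \<sigma>) y x" using xy yz by (simp_all add: prec_rev)
  have zx: "{z, x} \<in> I" using xz by (simp add: insert_commute)
  have "\<forall>xl. prec \<sigma> xl x \<and> {xl, x} \<in> I \<longrightarrow> \<not> lig_adj E {x, y} {xl, x}"
    using lig_independent_compatible_left[OF sg pio ind xy yz xz] by blast
  moreover have "\<exists>w. {y, w} \<in> I \<and> \<not> E x w \<and> prec \<sigma> z w" if "{x, y} \<notin> I"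
    using lig_max_weight_independent_missing_left[OF sg pio pos mwis xy yz xz that] .
  moreover have "\<not> lig_adj E {y, z} {z, zr}" if "prec \<sigma> z zr" "{z, zr} \<in> I" for zr
  proof -
    have "prec (rev \<sigma>) zr z" "{zr, z} \<in> I" using that by (simp_all add: prec_rev insert_commute)
    then have "\<not> lig_adj E {z, y} {zr, z}"
      using lig_independent_compatible_left[OF sg rpio ind zy yx zx] by blast
    then show ?thesis by (simp add: insert_commute)
  qed
  moreover have "\<exists>w. {w, y} \<in> I \<and> \<not> E w z \<and> prec \<sigma> w x" if "{y, z} \<notin> I"
  proof -
    have "{z, y} \<notin> I" using that by (simp add: insert_commute)
    then obtain w where "{y, w} \<in> I" "\<not> E z w" "prec (rev \<sigma>) x w"
      using lig_max_weight_independent_missing_left[OF sg rpio pos mwis zy yx zx] by blast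
    moreover have "\<not> E w z" using \<open>\<not> E z w\<close> simple_graph_sym[OF sg] by blast
    ultimately show ?thesis by (auto simp: prec_rev insert_commute)
  qed
  ultimately show ?thesis by blast
qed

end
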